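(* Let $X$ be a locally pseudocompact space. Then $\mathscr{U}(X)$ has a largest element with respect to $\leq$, namely the subspace $\zeta X=X\cup\mathrm{cl}_{\beta X}(\beta X\setminus\upsilon X)$ of $\beta X$.
   Context: All spaces are completely regular Hausdorff. $\beta X$ is the Stone–Čech compactification and $\upsilon X\subseteq\beta X$ the Hewitt realcompactification of $X$. An extension of $X$ is a space containing $X$ as a dense subspace; extensions are identified up to homeomorphisms fixing $X$ pointwise, and $Y\leq Y'$ means there is a continuous map $Y'\to Y$ fixing $X$ pointwise. $X$ is locally pseudocompact if every point has an open neighborhood with pseudocompact closure. $\mathscr{U}(X)$ is the set of pseudocompact extensions of $X$ with compact remainder. *)

theory Defs
  imports "HOL-Analysis.Analysis"
begin

definition tychonoff :: "'a topology \<Rightarrow> bool" where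
  "tychonoff X \<longleftrightarrow> Hausdorff_space X \<and> completely_regular_space X"

definition pseudocompact :: "'a topology \<Rightarrow> bool" where
  "pseudocompact X \<longleftrightarrow>
     (\<forall>f. continuous_map X euclideanreal f \<longrightarrow> bounded (f ` topspace X))"

definition locally_pseudocompact :: "'a topology \<Rightarrow> bool" where
  "locally_pseudocompact X \<longleftrightarrow>
     (\<forall>x\<in>topspace X. \<exists>U. openin X U \<and> x \<in> U \<and>
        pseudocompact (subtopology X (X closure_of U)))"

text \<open>An extension of X: a Tychonoff space Y together with an embedding j of X onto
  a dense subspace of Y (X is identified with its image).\<close>
definition is_extension :: "'a topology \<Rightarrow> 'b topology \<Rightarrow> ('a \<Rightarrow> 'b) \<Rightarrow> bool" where
  "is_extension X Y j \<longleftrightarrow> tychonoff Y \<and> embedding_map X Y j \<and>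
     Y closure_of (j ` topspace X) = topspace Y"

text \<open>Y' \<le> Y (extensions via j', j): a continuous map Y \<rightarrow> Y' fixing X pointwise.\<close>
definition ext_le :: "'a topology \<Rightarrow> 'c topology \<Rightarrow> ('a \<Rightarrow> 'c) \<Rightarrow> 'b topology \<Rightarrow> ('a \<Rightarrow> 'b) \<Rightarrow> bool" where
  "ext_le X Y' j' Y j \<longleftrightarrow>
     (\<exists>h. continuous_map Y Y' h \<and> (\<forall>x\<in>topspace X. h (j x) = j' x))"

definition in_U :: "'a topology \<Rightarrow> 'b topology \<Rightarrow> ('a \<Rightarrow> 'b) \<Rightarrow> bool" where
  "in_U X Y j \<longleftrightarrow> is_extension X Y j \<and> pseudocompact Y \<and>
     compactin Y (topspace Y - j ` topspace X)"

definition is_stone_cech :: "'a topology \<Rightarrow> 'b topology \<Rightarrow> ('a \<Rightarrow> 'b) \<Rightarrow> bool" where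
  "is_stone_cech X B e \<longleftrightarrow> is_extension X B e \<and> compact_space B \<and>
     (\<forall>f. continuous_map X euclideanreal f \<and> bounded (f ` topspace X) \<longrightarrow>
        (\<exists>g. continuous_map B euclideanreal g \<and> (\<forall>x\<in>topspace X. g (e x) = f x)))"

text \<open>Hewitt realcompactification \<upsilon>X as a subset of \<beta>X: the points p such that every
  continuous real function on X extends continuously to X \<union> {p}.\<close>
definition hewitt :: "'a topology \<Rightarrow> 'b topology \<Rightarrow> ('a \<Rightarrow> 'b) \<Rightarrow> 'b set" where
  "hewitt X B e = {p \<in> topspace B. \<forall>f. continuous_map X euclideanreal f \<longrightarrow>
     (\<exists>g. continuous_map (subtopology B (e ` topspace X \<union> {p})) euclideanreal g \<and>
          (\<forall>x\<in>topspace X. g (e x) = f x))}"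

definition zeta_set :: "'a topology \<Rightarrow> 'b topology \<Rightarrow> ('a \<Rightarrow> 'b) \<Rightarrow> 'b set" where
  "zeta_set X B e = e ` topspace X \<union> B closure_of (topspace B - hewitt X B e)"

end

theory Submission
  imports Defs
begin

text \<open>Call a point p of \<beta>X a Hewitt point if every continuous real function on X extends
  continuously to X \<union> {p}. If f is continuous on \<zeta>X, the Stone-Cech extension g of
  1/(1 + |f|) is positive everywhere on \<beta>X: at Hewitt points because f extends there, at the
  others because they lie in \<zeta>X. By compactness g is bounded below by some d > 0, so |f| \<le> 1/d
  and \<zeta>X is pseudocompact. Local pseudocompactness makes a neighbourhood of X consist of Hewitt
  points, so the remainder of \<zeta>X is the compact set cl(\<beta>X - \<upsilon>X).

  For maximality let Y \<in> \<U>(X). Every p \<in> \<zeta>X determines a point y of Y at which each bounded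
  continuous \<phi> on Y takes the value at p of the extension of \<phi>|X. Otherwise compactness of
  Y - X yields a bounded \<theta> vanishing near Y - X whose extension is close to 1 near p; near p
  there is a non-Hewitt point, hence a function f on X that is unbounded there, and \<theta>|f|
  extends by 0 to an unbounded continuous function on the pseudocompact space Y. The
  assignment p \<mapsto> y is the required map \<zeta>X \<rightarrow> Y.\<close>

lemma embedding_map_imp_inj_on: "embedding_map X Y j \<Longrightarrow> inj_on j (topspace X)"
  by (meson embedding_map_def homeomorphic_imp_injective_map)

lemma embedding_map_imp_continuous_map: "embedding_map X Y j \<Longrightarrow> continuous_map X Y j"
  by (meson embedding_map_def homeomorphic_imp_continuous_map continuous_map_into_fulltopology)

lemma continuous_map_inv_embedding:
  assumes "embedding_map X Y j"
  shows "continuous_map (subtopology Y (j ` topspace X)) X (inv_into (topspace X) j)"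
proof -
  obtain g where g: "homeomorphic_maps X (subtopology Y (j ` topspace X)) j g"
    using assms homeomorphic_map_maps by (metis embedding_map_def)
  then have "continuous_map (subtopology Y (j ` topspace X)) X g"
    by (simp add: homeomorphic_maps_def)
  moreover have "g y = inv_into (topspace X) j y"
    if "y \<in> topspace (subtopology Y (j ` topspace X))" for y
    using g that embedding_map_imp_inj_on[OF assms] unfolding homeomorphic_maps_def
    by (metis (no_types, lifting) IntE image_iff inv_into_f_f topspace_subtopology)
  ultimately show ?thesis
    using continuous_map_eq by blast
qed

lemma continuous_map_through_inv_embedding:
  assumes "embedding_map X Y j" "continuous_map X Z f"
  shows "continuous_map (subtopology Y (j ` topspace X)) Z (\<lambda>y. f (inv_into (topspace X) j y))"
  using continuous_map_compose[OF continuous_map_inv_embedding[OF assms(1)] assms(2)]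
  by (simp add: o_def)

lemma continuous_map_paste_open:
  assumes "openin X U" "openin X V" "topspace X \<subseteq> U \<union> V"
    and "continuous_map (subtopology X U) Y f" "continuous_map (subtopology X V) Y g"
    and "\<And>x. x \<in> U \<Longrightarrow> x \<in> V \<Longrightarrow> f x = g x"
  shows "continuous_map X Y (\<lambda>x. if x \<in> U then f x else g x)"
proof (rule pasting_lemma[where I = "{True, False}" and T = "\<lambda>b. if b then U else V"
      and f = "\<lambda>b. if b then f else g"])
  fix i :: bool
  show "openin X (if i then U else V)"
    using assms(1,2) by simp
  show "continuous_map (subtopology X (if i then U else V)) Y (if i then f else g)"
    using assms(4,5) by simp
  fix i' x assume "x \<in> topspace X \<inter> (if i then U else V) \<inter> (if i' then U else V)"
  then show "(if i then f else g) x = (if i' then f else g) x"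
    using assms(6) by (cases i; cases i') auto
next
  fix x assume x: "x \<in> topspace X"
  show "\<exists>b. b \<in> {True, False} \<and> x \<in> (if b then U else V) \<and>
      (if x \<in> U then f x else g x) = (if b then f else g) x"
  proof (cases "x \<in> U")
    case True
    then show ?thesis by (intro exI[of _ True]) simp
  next
    case False
    then show ?thesis using x assms(3) by (intro exI[of _ False]) auto
  qed
qed

lemma abs_le_on_closure_of:
  assumes "continuous_map T euclideanreal f" "\<And>x. x \<in> S \<Longrightarrow> \<bar>f x\<bar> \<le> c"
    and "x \<in> T closure_of S"
  shows "\<bar>f x\<bar> \<le> c"
proof -
  have closed: "closedin T {x \<in> topspace T. \<bar>f x\<bar> \<le> c}"
    using closedin_continuous_map_preimage[OF assms(1), of "cball 0 c"] by (simp add: dist_real_def)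
  show ?thesis
    by (rule forall_in_closure_of[of x T S "\<lambda>y. \<bar>f y\<bar> \<le> c", OF assms(3) assms(2) closed])
qed

lemma bounded_imp_abs_le:
  fixes f :: "'a \<Rightarrow> real"
  assumes "bounded (f ` S)"
  obtains M where "\<And>x. x \<in> S \<Longrightarrow> \<bar>f x\<bar> \<le> M"
  using assms unfolding bounded_iff by (metis image_eqI real_norm_def)

lemma abs_le_imp_bounded:
  fixes f :: "'a \<Rightarrow> real"
  assumes "\<And>x. x \<in> S \<Longrightarrow> \<bar>f x\<bar> \<le> M"
  shows "bounded (f ` S)"
  unfolding bounded_iff using assms by (intro exI[of _ M]) auto

definition inv_one_plus_abs :: "real \<Rightarrow> real" where
  "inv_one_plus_abs t = inverse (1 + \<bar>t\<bar>)"

lemma inv_one_plus_abs_pos: "0 < inv_one_plus_abs t"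
  by (simp add: inv_one_plus_abs_def add_pos_nonneg)

lemma abs_inv_one_plus_abs_le_1: "\<bar>inv_one_plus_abs t\<bar> \<le> 1"
  using inv_one_plus_abs_pos[of t] by (simp add: inv_one_plus_abs_def inverse_le_1_iff)

lemma abs_le_if_inv_one_plus_abs_ge: "0 < d \<Longrightarrow> d \<le> inv_one_plus_abs t \<Longrightarrow> \<bar>t\<bar> \<le> 1 / d"
  by (simp add: inv_one_plus_abs_def field_simps add_pos_nonneg)

lemma continuous_map_inv_one_plus_abs:
  assumes "continuous_map T euclideanreal h"
  shows "continuous_map T euclideanreal (\<lambda>x. inv_one_plus_abs (h x))"
  unfolding inv_one_plus_abs_def
proof (rule continuous_map_real_inverse)
  show "continuous_map T euclideanreal (\<lambda>x. 1 + \<bar>h x\<bar>)"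
    by (intro continuous_map_add continuous_map_real_abs assms) simp
qed (simp add: add_pos_nonneg)


lemma continuous_map_abs_diff_divide:
  assumes "continuous_map T euclideanreal u"
  shows "continuous_map T euclideanreal (\<lambda>z. \<bar>u z - a\<bar> / d)"
proof (cases "d = 0")
  case False
  show ?thesis
    by (rule continuous_map_real_divide, rule continuous_map_real_abs, rule continuous_map_diff)
      (use assms False in auto)
qed simp


lemma compactin_finite_subcover_pointwise:
  assumes "compactin Y R" "\<And>y. y \<in> R \<Longrightarrow> openin Y (W y)" "\<And>y. y \<in> R \<Longrightarrow> y \<in> W y"
  obtains K where "finite K" "K \<subseteq> R" "R \<subseteq> \<Union>(W ` K)"
proof -
  have "\<forall>U\<in>W ` R. openin Y U" "R \<subseteq> \<Union>(W ` R)"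
    using assms(2,3) by blast+
  then obtain F where F: "finite F" "F \<subseteq> W ` R" "R \<subseteq> \<Union>F"
    using assms(1) unfolding compactin_def by (elim conjE allE[where x = "W ` R"]) blast
  then obtain K where "K \<subseteq> R" "finite K" "F = W ` K"
    using finite_subset_image[OF F(1,2)] by blast
  with F(3) that show ?thesis
    by blast
qed


section \<open>Stone-Cech compactifications and Hewitt points\<close>

locale stone_cech =
  fixes X :: "'a topology" and B :: "'b topology" and e :: "'a \<Rightarrow> 'b"
  assumes is_stone_cech: "is_stone_cech X B e"
begin

lemma embedding: "embedding_map X B e"
  and dense: "B closure_of (e ` topspace X) = topspace B"
  and compact: "compact_space B"
  and Hausdorff: "Hausdorff_space B"
  and completely_regular: "completely_regular_space B"
  using is_stone_cech by (simp_all add: is_stone_cech_def is_extension_def tychonoff_def)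

lemma image_subset_topspace: "e ` topspace X \<subseteq> topspace B"
  using continuous_map_image_subset_topspace embedding embedding_map_imp_continuous_map by blast

lemma continuous_map_into_subspace:
  "e ` topspace X \<subseteq> S \<Longrightarrow> continuous_map X (subtopology B S) e"
  by (simp add: continuous_map_in_subtopology embedding_map_imp_continuous_map[OF embedding]
      image_subset_iff_funcset)

lemma extension_exists:
  assumes "continuous_map X euclideanreal f" "bounded (f ` topspace X)"
  obtains g where "continuous_map B euclideanreal g" "\<And>x. x \<in> topspace X \<Longrightarrow> g (e x) = f x"
  using is_stone_cech assms unfolding is_stone_cech_def by blast

lemma extension_unique:
  assumes "continuous_map B euclideanreal g1" "continuous_map B euclideanreal g2"
    and "\<And>x. x \<in> topspace X \<Longrightarrow> g1 (e x) = g2 (e x)" "p \<in> topspace B"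
  shows "g1 p = g2 p"
  using forall_in_closure_of_eq[of p B "e ` topspace X" euclideanreal g1 g2] assms dense by auto

lemma subspace_closure_of_image:
  assumes "e ` topspace X \<subseteq> S" "S \<subseteq> topspace B"
  shows "subtopology B S closure_of (e ` topspace X) = S"
  using assms dense by (simp add: closure_of_subtopology Int_absorb1 Int_absorb2)

lemma extension_agreeing_where_bounded:
  assumes f: "continuous_map X euclideanreal f"
    and bound: "\<And>x. x \<in> topspace X \<Longrightarrow> e x \<in> N \<Longrightarrow> \<bar>f x\<bar> \<le> M"
  obtains g where "continuous_map B euclideanreal g"
    "\<And>x. x \<in> topspace X \<Longrightarrow> e x \<in> N \<Longrightarrow> g (e x) = f x"
proof -
  define f' where "f' x = max (- M) (min M (f x))" for x
  have "continuous_map X euclideanreal f'"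
    unfolding f'_def by (intro continuous_map_real_max continuous_map_real_min f) simp_all
  moreover have "bounded (f' ` topspace X)"
    by (rule abs_le_imp_bounded[where M = "\<bar>M\<bar>"])
      (simp add: f'_def abs_le_iff min_def max_def abs_ge_self abs_ge_minus_self)
  ultimately obtain g where g: "continuous_map B euclideanreal g"
    and ge: "\<And>x. x \<in> topspace X \<Longrightarrow> g (e x) = f' x"
    using extension_exists by blast
  have "g (e x) = f x" if "x \<in> topspace X" "e x \<in> N" for x
    using ge[OF that(1)] bound[OF that] by (simp add: f'_def)
  with g that show ?thesis
    by blast
qed

lemma extends_to_point_if_locally_bounded:
  assumes N: "openin B N" "p \<in> N" and f: "continuous_map X euclideanreal f"
    and bound: "\<And>x. x \<in> topspace X \<Longrightarrow> e x \<in> N \<Longrightarrow> \<bar>f x\<bar> \<le> M"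
  shows "\<exists>g. continuous_map (subtopology B (e ` topspace X \<union> {p})) euclideanreal g \<and>
          (\<forall>x\<in>topspace X. g (e x) = f x)"
proof -
  define E where "E = e ` topspace X"
  define T where "T = E \<union> {p}"
  obtain g where g: "continuous_map B euclideanreal g"
    and ge_N: "\<And>x. x \<in> topspace X \<Longrightarrow> e x \<in> N \<Longrightarrow> g (e x) = f x"
    using extension_agreeing_where_bounded[OF f bound] by blast
  have inv: "inv_into (topspace X) e (e x) = x" if "x \<in> topspace X" for x
    using embedding_map_imp_inj_on[OF embedding] that by simp
  define G where "G y = (if y \<in> T \<inter> N then g y else f (inv_into (topspace X) e y))" for y
  have "continuous_map (subtopology B T) euclideanreal G"
    unfolding G_def
  proof (rule continuous_map_paste_open)
    have "T \<subseteq> topspace B"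
      using image_subset_topspace openin_subset[OF N(1)] N(2) unfolding T_def E_def by blast
    moreover have "closedin B {p}"
      using closedin_Hausdorff_singleton[OF Hausdorff] openin_subset[OF N(1)] N(2) by blast
    ultimately show "openin (subtopology B T) (T - {p})"
      by (rule openin_subtopology_diff_closed)
    show "openin (subtopology B T) (T \<inter> N)"
      using openin_subtopology_Int2[OF N(1)] .
    show "topspace (subtopology B T) \<subseteq> T \<inter> N \<union> (T - {p})"
      using N(2) by auto
    show "continuous_map (subtopology (subtopology B T) (T \<inter> N)) euclideanreal g"
      by (intro continuous_map_from_subtopology g)
    have "continuous_map (subtopology B E) euclideanreal (\<lambda>y. f (inv_into (topspace X) e y))"
      using continuous_map_through_inv_embedding[OF embedding f] by (simp add: E_def)
    then have "continuous_map (subtopology B (T - {p})) euclideanreal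
        (\<lambda>y. f (inv_into (topspace X) e y))"
      by (rule continuous_map_from_subtopology_mono) (simp add: T_def Diff_subset_conv)
    then show "continuous_map (subtopology (subtopology B T) (T - {p})) euclideanreal
        (\<lambda>y. f (inv_into (topspace X) e y))"
      by (simp add: subtopology_subtopology Int_absorb1 Diff_subset)
    show "g y = f (inv_into (topspace X) e y)" if y: "y \<in> T \<inter> N" "y \<in> T - {p}" for y
    proof -
      obtain x where "x \<in> topspace X" "y = e x"
        using y unfolding T_def E_def by blast
      with y show ?thesis
        using ge_N inv by simp
    qed
  qed
  moreover have "G (e x) = f x" if "x \<in> topspace X" for x
    using that ge_N inv by (simp add: G_def T_def E_def)
  ultimately show ?thesis
    unfolding T_def E_def by blast
qed

lemma unbounded_near_non_hewitt_point:
  assumes "p \<in> topspace B" "p \<notin> hewitt X B e"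
  obtains f where "continuous_map X euclideanreal f"
    "\<And>N M. openin B N \<Longrightarrow> p \<in> N \<Longrightarrow> \<exists>x\<in>topspace X. e x \<in> N \<and> M < \<bar>f x\<bar>"
proof -
  obtain f where f: "continuous_map X euclideanreal f"
    and no_ext: "\<nexists>g. continuous_map (subtopology B (e ` topspace X \<union> {p})) euclideanreal g \<and>
          (\<forall>x\<in>topspace X. g (e x) = f x)"
    using assms unfolding hewitt_def by blast
  have "\<exists>x\<in>topspace X. e x \<in> N \<and> M < \<bar>f x\<bar>" if "openin B N" "p \<in> N" for N M
    using extends_to_point_if_locally_bounded[OF that f, of M] no_ext by force
  with f that show ?thesis by blast
qed

lemma hewitt_contains_nhood_of_image:
  assumes "locally_pseudocompact X" and x: "x \<in> topspace X"
  obtains W where "openin B W" "e x \<in> W" "W \<subseteq> hewitt X B e"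
proof -
  obtain U where U: "openin X U" "x \<in> U"
    and pc: "pseudocompact (subtopology X (X closure_of U))"
    using assms unfolding locally_pseudocompact_def by blast
  have "openin (subtopology B (e ` topspace X)) (e ` U)"
    using embedding U(1) unfolding embedding_map_def
    by (meson homeomorphic_imp_open_map open_map_def)
  then obtain W where W: "openin B W" "e ` U = W \<inter> e ` topspace X"
    unfolding openin_subtopology by blast
  have U_sub: "U \<subseteq> topspace X"
    using U(1) openin_subset by blast
  have "p \<in> hewitt X B e" if p: "p \<in> W" for p
  proof -
    have "\<exists>g. continuous_map (subtopology B (e ` topspace X \<union> {p})) euclideanreal g \<and>
          (\<forall>x\<in>topspace X. g (e x) = f x)" if f: "continuous_map X euclideanreal f" for f
    proof -
      obtain M where M: "\<And>y. y \<in> X closure_of U \<Longrightarrow> \<bar>f y\<bar> \<le> M"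
        using pc continuous_map_from_subtopology[OF f, of "X closure_of U"]
          bounded_imp_abs_le[of f "X closure_of U"]
        unfolding pseudocompact_def by (metis closure_of_subset_topspace topspace_subtopology_subset)
      have "y \<in> X closure_of U" if "y \<in> topspace X" "e y \<in> W" for y
      proof -
        have "y \<in> U"
          using W(2) that embedding_map_imp_inj_on[OF embedding] U_sub by (auto dest: inj_onD)
        then show ?thesis
          using closure_of_subset[OF U_sub] by blast
      qed
      then show ?thesis
        using extends_to_point_if_locally_bounded[OF W(1) p f] M by blast
    qed
    then show ?thesis
      unfolding hewitt_def using p openin_subset[OF W(1)] by blast
  qed
  then have "W \<subseteq> hewitt X B e" by blast
  with W U(2) that show ?thesis by blast
qed

lemma image_disjoint_closure_non_hewitt:
  assumes "locally_pseudocompact X"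
  shows "e ` topspace X \<inter> B closure_of (topspace B - hewitt X B e) = {}"
proof -
  have "e x \<notin> B closure_of (topspace B - hewitt X B e)" if x: "x \<in> topspace X" for x
  proof
    obtain W where W: "openin B W" "e x \<in> W" "W \<subseteq> hewitt X B e"
      using hewitt_contains_nhood_of_image[OF assms x] .
    assume "e x \<in> B closure_of (topspace B - hewitt X B e)"
    then obtain y where "y \<in> topspace B - hewitt X B e" "y \<in> W"
      using W(1,2) unfolding in_closure_of by blast
    with W(3) show False by blast
  qed
  then show ?thesis by blast
qed


section \<open>The extension \<zeta>X\<close>

lemma zeta_subset_topspace: "zeta_set X B e \<subseteq> topspace B"
  unfolding zeta_set_def by (intro Un_least image_subset_topspace closure_of_subset_topspace)

lemma image_subset_zeta: "e ` topspace X \<subseteq> zeta_set X B e"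
  unfolding zeta_set_def by (rule Un_upper1)

lemma non_hewitt_subset_zeta: "topspace B - hewitt X B e \<subseteq> zeta_set X B e"
  unfolding zeta_set_def by (intro le_supI2 closure_of_subset Diff_subset)

lemma extension_of_inv_one_plus_abs_pos:
  assumes Z: "e ` topspace X \<subseteq> Z" "Z \<subseteq> topspace B" "topspace B - hewitt X B e \<subseteq> Z"
    and f: "continuous_map (subtopology B Z) euclideanreal f"
    and g: "continuous_map B euclideanreal g"
      "\<And>x. x \<in> topspace X \<Longrightarrow> g (e x) = inv_one_plus_abs (f (e x))"
    and p: "p \<in> topspace B"
  shows "0 < g p"
proof -
  have agree: "g p = inv_one_plus_abs (k p)"
    if S: "e ` topspace X \<subseteq> S" "S \<subseteq> topspace B" "p \<in> S"
      and k: "continuous_map (subtopology B S) euclideanreal k"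
      "\<And>x. x \<in> topspace X \<Longrightarrow> k (e x) = f (e x)" for S k
  proof (rule forall_in_closure_of_eq[where f = g and g = "\<lambda>y. inv_one_plus_abs (k y)",
        OF _ Hausdorff_space_euclidean])
    show "p \<in> subtopology B S closure_of e ` topspace X"
      using subspace_closure_of_image[OF S(1,2)] S(3) by simp
    show "continuous_map (subtopology B S) euclideanreal g"
      using g(1) by (rule continuous_map_from_subtopology)
    show "continuous_map (subtopology B S) euclideanreal (\<lambda>y. inv_one_plus_abs (k y))"
      using k(1) by (rule continuous_map_inv_one_plus_abs)
    show "g y = inv_one_plus_abs (k y)" if "y \<in> e ` topspace X" for y
      using that g(2) k(2) by auto
  qed
  have fe: "continuous_map X euclideanreal (\<lambda>x. f (e x))"
    using continuous_map_compose[OF continuous_map_into_subspace[OF Z(1)] f] by (simp add: o_def)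
  show ?thesis
  proof (cases "p \<in> hewitt X B e")
    case True
    then obtain k where "continuous_map (subtopology B (e ` topspace X \<union> {p})) euclideanreal k"
      "\<forall>x\<in>topspace X. k (e x) = f (e x)"
      unfolding hewitt_def using fe by blast
    then have "g p = inv_one_plus_abs (k p)"
      using agree[of "e ` topspace X \<union> {p}"] image_subset_topspace p by auto
    then show ?thesis using inv_one_plus_abs_pos by simp
  next
    case False
    then have "g p = inv_one_plus_abs (f p)"
      using agree[of Z f] Z p f by blast
    then show ?thesis using inv_one_plus_abs_pos by simp
  qed
qed

lemma pseudocompact_if_contains_non_hewitt:
  assumes Z: "e ` topspace X \<subseteq> Z" "Z \<subseteq> topspace B" "topspace B - hewitt X B e \<subseteq> Z"
  shows "pseudocompact (subtopology B Z)"
  unfolding pseudocompact_def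
proof (intro allI impI)
  fix f assume f: "continuous_map (subtopology B Z) euclideanreal f"
  have "continuous_map X euclideanreal (\<lambda>x. inv_one_plus_abs (f (e x)))"
    using continuous_map_compose[OF continuous_map_into_subspace[OF Z(1)] f]
    by (intro continuous_map_inv_one_plus_abs) (simp add: o_def)
  moreover have "bounded ((\<lambda>x. inv_one_plus_abs (f (e x))) ` topspace X)"
    by (rule abs_le_imp_bounded[where M = 1]) (rule abs_inv_one_plus_abs_le_1)
  ultimately obtain g where g: "continuous_map B euclideanreal g"
    "\<And>x. x \<in> topspace X \<Longrightarrow> g (e x) = inv_one_plus_abs (f (e x))"
    using extension_exists by blast
  show "bounded (f ` topspace (subtopology B Z))"
  proof (cases "topspace B = {}")
    case True
    then show ?thesis using Z by simp
  next
    case False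
    have "compact (g ` topspace B)"
      using image_compactin[OF _ g(1)] compact compact_space_def by fastforce
    then obtain q where q: "q \<in> topspace B" and min: "\<And>p. p \<in> topspace B \<Longrightarrow> g q \<le> g p"
      using compact_attains_inf[of "g ` topspace B"] False by auto
    have d: "0 < g q"
      using extension_of_inv_one_plus_abs_pos[OF Z f g q] .
    have "\<bar>f (e x)\<bar> \<le> 1 / g q" if "x \<in> topspace X" for x
    proof (rule abs_le_if_inv_one_plus_abs_ge[OF d])
      show "g q \<le> inv_one_plus_abs (f (e x))"
        using min[of "e x"] g(2)[OF that] image_subset_topspace that by auto
    qed
    then have "\<bar>f z\<bar> \<le> 1 / g q" if "z \<in> topspace (subtopology B Z)" for z
      using abs_le_on_closure_of[OF f, of "e ` topspace X" "1 / g q" z]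
        subspace_closure_of_image[OF Z(1,2)] that Z(2)
      by auto
    then show ?thesis
      by (rule abs_le_imp_bounded)
  qed
qed

lemma zeta_in_U:
  assumes "locally_pseudocompact X"
  shows "in_U X (subtopology B (zeta_set X B e)) e"
  unfolding in_U_def is_extension_def tychonoff_def
proof (intro conjI)
  let ?Z = "zeta_set X B e"
  show "Hausdorff_space (subtopology B ?Z)"
    using Hausdorff Hausdorff_space_subtopology by blast
  show "completely_regular_space (subtopology B ?Z)"
    using completely_regular completely_regular_space_subtopology by blast
  show "embedding_map X (subtopology B ?Z) e"
    using embedding image_subset_zeta embedding_map_in_subtopology by blast
  show "subtopology B ?Z closure_of e ` topspace X = topspace (subtopology B ?Z)"
    using subspace_closure_of_image[OF image_subset_zeta zeta_subset_topspace]
      zeta_subset_topspace by auto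
  show "pseudocompact (subtopology B ?Z)"
    using pseudocompact_if_contains_non_hewitt[OF image_subset_zeta zeta_subset_topspace
        non_hewitt_subset_zeta] .
  have "topspace (subtopology B ?Z) - e ` topspace X = B closure_of (topspace B - hewitt X B e)"
    using image_disjoint_closure_non_hewitt[OF assms] zeta_subset_topspace
    unfolding zeta_set_def by auto
  moreover have "compactin B (B closure_of (topspace B - hewitt X B e))"
    by (rule closedin_compact_space[OF compact closedin_closure_of])
  ultimately show "compactin (subtopology B ?Z) (topspace (subtopology B ?Z) - e ` topspace X)"
    by (simp add: compactin_subtopology zeta_set_def)
qed

end


section \<open>Maximality of \<zeta>X\<close>

locale extension_in_U = stone_cech X B e
  for X :: "'a topology" and B :: "'b topology" and e :: "'a \<Rightarrow> 'b" +
  fixes Y :: "'c topology" and j :: "'a \<Rightarrow> 'c"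
  assumes in_U: "in_U X Y j"
begin

lemma embedding_Y: "embedding_map X Y j"
  and Hausdorff_Y: "Hausdorff_space Y"
  and completely_regular_Y: "completely_regular_space Y"
  and pseudocompact_Y: "pseudocompact Y"
  and compact_remainder: "compactin Y (topspace Y - j ` topspace X)"
  using in_U by (simp_all add: in_U_def is_extension_def tychonoff_def)

lemma image_subset_topspace_Y: "j ` topspace X \<subseteq> topspace Y"
  using continuous_map_image_subset_topspace embedding_Y embedding_map_imp_continuous_map by blast

lemma openin_image_Y: "openin Y (j ` topspace X)"
proof -
  have "closedin Y (topspace Y - j ` topspace X)"
    by (rule compactin_imp_closedin[OF Hausdorff_Y compact_remainder])
  then have "openin Y (topspace Y - (topspace Y - j ` topspace X))"
    by (rule openin_diff[OF openin_topspace])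
  then show ?thesis
    using image_subset_topspace_Y by (simp add: Diff_Diff_Int Int_absorb1)
qed

definition bounded_continuous :: "('c \<Rightarrow> real) set" where
  "bounded_continuous = {\<phi>. continuous_map Y euclideanreal \<phi> \<and> bounded (\<phi> ` topspace Y)}"

lemma bounded_continuousI:
  assumes "continuous_map Y euclideanreal \<phi>" "\<And>z. z \<in> topspace Y \<Longrightarrow> \<bar>\<phi> z\<bar> \<le> K"
  shows "\<phi> \<in> bounded_continuous"
  unfolding bounded_continuous_def using assms(1) abs_le_imp_bounded[OF assms(2)] by simp

lemma bounded_continuousD: "\<phi> \<in> bounded_continuous \<Longrightarrow> continuous_map Y euclideanreal \<phi>"
  unfolding bounded_continuous_def by simp

definition sc_extension :: "('c \<Rightarrow> real) \<Rightarrow> 'b \<Rightarrow> real" where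
  "sc_extension \<phi> =
     (SOME g. continuous_map B euclideanreal g \<and> (\<forall>x\<in>topspace X. g (e x) = \<phi> (j x)))"

lemma sc_extension:
  assumes "\<phi> \<in> bounded_continuous"
  shows "continuous_map B euclideanreal (sc_extension \<phi>)"
    and "\<And>x. x \<in> topspace X \<Longrightarrow> sc_extension \<phi> (e x) = \<phi> (j x)"
proof -
  have "continuous_map X euclideanreal (\<lambda>x. \<phi> (j x))"
    using continuous_map_compose[OF embedding_map_imp_continuous_map[OF embedding_Y]
        bounded_continuousD[OF assms]] by (simp add: o_def)
  moreover have "bounded ((\<lambda>x. \<phi> (j x)) ` topspace X)"
  proof (rule bounded_subset)
    show "bounded (\<phi> ` topspace Y)"
      using assms by (simp add: bounded_continuous_def)
    show "(\<lambda>x. \<phi> (j x)) ` topspace X \<subseteq> \<phi> ` topspace Y"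
      using image_subset_topspace_Y by blast
  qed
  ultimately obtain g where
    "continuous_map B euclideanreal g" "\<And>x. x \<in> topspace X \<Longrightarrow> g (e x) = \<phi> (j x)"
    using extension_exists by blast
  then have "continuous_map B euclideanreal g \<and> (\<forall>x\<in>topspace X. g (e x) = \<phi> (j x))"
    by blast
  then have "continuous_map B euclideanreal (sc_extension \<phi>) \<and>
      (\<forall>x\<in>topspace X. sc_extension \<phi> (e x) = \<phi> (j x))"
    unfolding sc_extension_def
    by (rule someI[where P = "\<lambda>g. continuous_map B euclideanreal g \<and>
        (\<forall>x\<in>topspace X. g (e x) = \<phi> (j x))"])
  then show "continuous_map B euclideanreal (sc_extension \<phi>)"
    "\<And>x. x \<in> topspace X \<Longrightarrow> sc_extension \<phi> (e x) = \<phi> (j x)"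
    by simp_all
qed

lemma sc_extension_eq:
  assumes "\<phi> \<in> bounded_continuous" "continuous_map B euclideanreal g"
    and "\<And>x. x \<in> topspace X \<Longrightarrow> g (e x) = \<phi> (j x)" "q \<in> topspace B"
  shows "sc_extension \<phi> q = g q"
  by (rule extension_unique[OF sc_extension(1)[OF assms(1)] assms(2) _ assms(4)])
    (simp add: sc_extension(2)[OF assms(1)] assms(3))

lemma urysohn_function_Y:
  assumes "closedin Y C" "y \<in> topspace Y" "y \<notin> C"
  obtains \<psi> where "\<psi> \<in> bounded_continuous" "\<psi> y = 0" "\<And>z. z \<in> C \<Longrightarrow> \<psi> z = 1"
proof -
  have "\<exists>\<psi> :: 'c \<Rightarrow> real. continuous_map Y (top_of_set {0..1}) \<psi> \<and> \<psi> y = 0 \<and> \<psi> ` C \<subseteq> {1}"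
    using completely_regular_Y assms unfolding completely_regular_space_def by blast
  then obtain \<psi> :: "'c \<Rightarrow> real" where \<psi>: "continuous_map Y (top_of_set {0..1}) \<psi>" "\<psi> y = 0"
    "\<psi> ` C \<subseteq> {1}"
    by blast
  then have "continuous_map Y euclideanreal \<psi>" "\<psi> ` topspace Y \<subseteq> {0..1}"
    by (simp_all add: continuous_map_in_subtopology image_subset_iff_funcset)
  then have "\<psi> \<in> bounded_continuous"
    by (intro bounded_continuousI[where K = 1]) auto
  with \<psi> that show ?thesis by blast
qed

text \<open>The point of Y that p \<in> \<beta>X is sent to by the extension \<beta>X \<rightarrow> \<beta>Y of the identity of X.\<close>

definition image_point :: "'b \<Rightarrow> 'c \<Rightarrow> bool" where
  "image_point p y \<longleftrightarrow> y \<in> topspace Y \<and> (\<forall>\<phi>\<in>bounded_continuous. sc_extension \<phi> p = \<phi> y)"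

lemma image_point_unique:
  assumes "image_point p y1" "image_point p y2"
  shows "y1 = y2"
proof (rule ccontr)
  assume "y1 \<noteq> y2"
  moreover have "closedin Y {y2}"
    using closedin_Hausdorff_singleton[OF Hausdorff_Y] assms(2) unfolding image_point_def by simp
  moreover have "y1 \<in> topspace Y"
    using assms(1) unfolding image_point_def by simp
  ultimately obtain \<psi> where \<psi>: "\<psi> \<in> bounded_continuous" "\<psi> y1 = 0" "\<psi> y2 = 1"
    using urysohn_function_Y[of "{y2}" y1] by blast
  have "sc_extension \<psi> p = \<psi> y1" "sc_extension \<psi> p = \<psi> y2"
    using assms \<psi>(1) unfolding image_point_def by blast+
  with \<psi>(2,3) show False
    by simp
qed

lemma image_point_image:
  assumes "x \<in> topspace X"
  shows "image_point (e x) (j x)"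
  unfolding image_point_def using assms image_subset_topspace_Y by (auto simp: sc_extension(2))

lemma separating_function_vanishing_at:
  assumes p: "p \<in> topspace B" and y: "y \<in> topspace Y" "\<not> image_point p y"
  obtains \<psi> where "\<psi> \<in> bounded_continuous" "sc_extension \<psi> p = 0" "\<psi> y = 1"
    "\<And>z. 0 \<le> \<psi> z"
proof -
  obtain \<phi> where \<phi>: "\<phi> \<in> bounded_continuous" "sc_extension \<phi> p \<noteq> \<phi> y"
    using y unfolding image_point_def by blast
  define a where "a = sc_extension \<phi> p"
  define d where "d = \<bar>\<phi> y - a\<bar>"
  have d: "0 < d"
    using \<phi>(2) by (simp add: d_def a_def)
  have "bounded (\<phi> ` topspace Y)"
    using \<phi>(1) by (simp add: bounded_continuous_def)
  then obtain K where K: "\<And>z. z \<in> topspace Y \<Longrightarrow> \<bar>\<phi> z\<bar> \<le> K"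
    using bounded_imp_abs_le by blast
  define \<psi> where "\<psi> z = \<bar>\<phi> z - a\<bar> / d" for z
  have "\<psi> \<in> bounded_continuous"
  proof (rule bounded_continuousI)
    show "continuous_map Y euclideanreal \<psi>"
      unfolding \<psi>_def by (rule continuous_map_abs_diff_divide[OF bounded_continuousD[OF \<phi>(1)]])
    show "\<bar>\<psi> z\<bar> \<le> (K + \<bar>a\<bar>) / d" if "z \<in> topspace Y" for z
      using K[OF that] d unfolding \<psi>_def by (simp add: divide_right_mono abs_triangle_ineq4 order_trans)
  qed
  moreover have "sc_extension \<psi> p = 0"
  proof -
    have "sc_extension \<psi> p = \<bar>sc_extension \<phi> p - a\<bar> / d"
      using p \<phi>(1) sc_extension(2)
      by (intro sc_extension_eq[OF \<open>\<psi> \<in> bounded_continuous\<close>] continuous_map_abs_diff_divide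
          sc_extension(1)) (simp_all add: \<psi>_def)
    then show ?thesis
      by (simp add: a_def)
  qed
  moreover have "\<psi> y = 1"
    using d by (simp add: \<psi>_def d_def)
  ultimately show ?thesis
    using that d by (simp add: \<psi>_def)
qed

lemma separating_family_on_remainder:
  assumes p: "p \<in> topspace B"
    and no_image: "\<And>y. y \<in> topspace Y - j ` topspace X \<Longrightarrow> \<not> image_point p y"
  obtains K :: "'c set" and \<Psi> :: "'c \<Rightarrow> 'c \<Rightarrow> real"
  where "finite K" "\<And>y. y \<in> K \<Longrightarrow> \<Psi> y \<in> bounded_continuous"
    "\<And>y. y \<in> K \<Longrightarrow> sc_extension (\<Psi> y) p = 0" "\<And>y z. y \<in> K \<Longrightarrow> 0 \<le> \<Psi> y z"
    "topspace Y - j ` topspace X \<subseteq> (\<Union>y\<in>K. {z \<in> topspace Y. 1/2 < \<Psi> y z})"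
proof -
  let ?R = "topspace Y - j ` topspace X"
  have "\<exists>\<psi>. \<psi> \<in> bounded_continuous \<and> sc_extension \<psi> p = 0 \<and> \<psi> y = 1 \<and> (\<forall>z. 0 \<le> \<psi> z)"
    if y: "y \<in> ?R" for y
  proof -
    have "y \<in> topspace Y"
      using y by blast
    then obtain \<psi> where "\<psi> \<in> bounded_continuous" "sc_extension \<psi> p = 0" "\<psi> y = 1"
      "\<And>z. 0 \<le> \<psi> z"
      using separating_function_vanishing_at[OF p _ no_image[OF y]] by blast
    then show ?thesis by blast
  qed
  then obtain \<Psi> where \<Psi>: "\<And>y. y \<in> ?R \<Longrightarrow> \<Psi> y \<in> bounded_continuous \<and>
      sc_extension (\<Psi> y) p = 0 \<and> \<Psi> y y = 1 \<and> (\<forall>z. 0 \<le> \<Psi> y z)"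
    by metis
  define W where "W y = {z \<in> topspace Y. 1/2 < \<Psi> y z}" for y
  obtain K where K: "finite K" "K \<subseteq> ?R" "?R \<subseteq> \<Union>(W ` K)"
  proof (rule compactin_finite_subcover_pointwise[OF compact_remainder])
    fix y assume y: "y \<in> ?R"
    have "continuous_map Y euclideanreal (\<Psi> y)"
      using \<Psi>[OF y] bounded_continuousD by blast
    from openin_continuous_map_preimage[OF this, of "{1/2<..}"]
    show "openin Y (W y)"
      by (simp add: W_def)
    show "y \<in> W y"
      using y \<Psi>[OF y] by (simp add: W_def)
  qed
  have \<Psi>K: "\<Psi> y \<in> bounded_continuous" "sc_extension (\<Psi> y) p = 0" "0 \<le> \<Psi> y z"
    if "y \<in> K" for y z
  proof -
    have "y \<in> ?R"
      using that K(2) by blast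
    then show "\<Psi> y \<in> bounded_continuous" "sc_extension (\<Psi> y) p = 0" "0 \<le> \<Psi> y z"
      using \<Psi> by simp_all
  qed
  show ?thesis
    using that[OF K(1) \<Psi>K(1) \<Psi>K(2) \<Psi>K(3) K(3)[unfolded W_def]] .
qed

lemma bump_from_separating_family:
  assumes p: "p \<in> topspace B" and K: "finite K"
    and \<Psi>: "\<And>y. y \<in> K \<Longrightarrow> \<Psi> y \<in> bounded_continuous" "\<And>y. y \<in> K \<Longrightarrow> sc_extension (\<Psi> y) p = 0"
      "\<And>y z. y \<in> K \<Longrightarrow> 0 \<le> \<Psi> y z"
  defines "S \<equiv> \<lambda>z. \<Sum>y\<in>K. \<Psi> y z"
  defines "\<theta> \<equiv> \<lambda>z. max 0 (1 - 2 * S z)"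
  shows "\<theta> \<in> bounded_continuous" and "sc_extension \<theta> p = 1"
proof -
  have cont_S: "continuous_map Y euclideanreal S"
    unfolding S_def by (intro continuous_map_sum K bounded_continuousD \<Psi>)
  show \<theta>: "\<theta> \<in> bounded_continuous"
  proof (rule bounded_continuousI[where K = 1])
    show "continuous_map Y euclideanreal \<theta>"
      unfolding \<theta>_def by (intro continuous_map_real_max continuous_map_diff continuous_map_real_mult
          cont_S) simp_all
    have "0 \<le> S z" for z
      unfolding S_def by (intro sum_nonneg \<Psi>(3))
    then show "\<bar>\<theta> z\<bar> \<le> 1" for z
      by (simp add: \<theta>_def abs_le_iff max_def)
  qed
  have "sc_extension \<theta> p = max 0 (1 - 2 * (\<Sum>y\<in>K. sc_extension (\<Psi> y) p))"
  proof (rule sc_extension_eq[OF \<theta> _ _ p])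
    show "continuous_map B euclideanreal (\<lambda>q. max 0 (1 - 2 * (\<Sum>y\<in>K. sc_extension (\<Psi> y) q)))"
      by (intro continuous_map_real_max continuous_map_diff continuous_map_real_mult
          continuous_map_sum K sc_extension(1) \<Psi>) simp_all
    show "max 0 (1 - 2 * (\<Sum>y\<in>K. sc_extension (\<Psi> y) (e x))) = \<theta> (j x)"
      if "x \<in> topspace X" for x
      using sc_extension(2)[OF \<Psi>(1) that] by (simp add: \<theta>_def S_def)
  qed
  also have "(\<Sum>y\<in>K. sc_extension (\<Psi> y) p) = 0"
    by (rule sum.neutral) (simp add: \<Psi>(2))
  finally show "sc_extension \<theta> p = 1"
    by simp
qed

lemma bump_vanishing_near_remainder:
  assumes p: "p \<in> topspace B"
    and no_image: "\<And>y. y \<in> topspace Y - j ` topspace X \<Longrightarrow> \<not> image_point p y"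
  obtains \<theta> V where "\<theta> \<in> bounded_continuous" "openin Y V" "topspace Y - j ` topspace X \<subseteq> V"
    "\<And>z. z \<in> V \<Longrightarrow> \<theta> z = 0" "sc_extension \<theta> p = 1"
proof (rule separating_family_on_remainder[OF p no_image])
  fix K :: "'c set" and \<Psi> :: "'c \<Rightarrow> 'c \<Rightarrow> real"
  assume K: "finite K" and \<Psi>: "\<And>y. y \<in> K \<Longrightarrow> \<Psi> y \<in> bounded_continuous"
    "\<And>y. y \<in> K \<Longrightarrow> sc_extension (\<Psi> y) p = 0" "\<And>y z. y \<in> K \<Longrightarrow> 0 \<le> \<Psi> y z"
    and cover: "topspace Y - j ` topspace X \<subseteq> (\<Union>y\<in>K. {z \<in> topspace Y. 1/2 < \<Psi> y z})"
  define S where "S z = (\<Sum>y\<in>K. \<Psi> y z)" for z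
  define \<theta> where "\<theta> = (\<lambda>z. max 0 (1 - 2 * S z))"
  define V where "V = {z \<in> topspace Y. 1/2 < S z}"
  have \<theta>: "\<theta> \<in> bounded_continuous" "sc_extension \<theta> p = 1"
    using bump_from_separating_family[of p K \<Psi>, OF p K \<Psi>] by (simp_all add: \<theta>_def S_def)
  have "continuous_map Y euclideanreal S"
    unfolding S_def by (intro continuous_map_sum K bounded_continuousD \<Psi>)
  from openin_continuous_map_preimage[OF this, of "{1/2<..}"]
  have V_open: "openin Y V"
    by (simp add: V_def)
  have V_cover: "topspace Y - j ` topspace X \<subseteq> V"
  proof
    fix z assume "z \<in> topspace Y - j ` topspace X"
    then obtain y where y: "y \<in> K" "z \<in> topspace Y" "1/2 < \<Psi> y z"
      using cover by blast
    have "\<Psi> y z \<le> S z"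
      unfolding S_def by (rule member_le_sum[OF y(1) _ K]) (simp add: \<Psi>(3))
    with y show "z \<in> V"
      unfolding V_def by simp
  qed
  have \<theta>_V: "\<theta> z = 0" if "z \<in> V" for z
    using that by (simp add: \<theta>_def V_def)
  show ?thesis
    using that[OF \<theta>(1) V_open V_cover \<theta>_V \<theta>(2)] .
qed

lemma bounded_product_with_bump:
  assumes \<theta>: "continuous_map Y euclideanreal \<theta>"
    and V: "openin Y V" "topspace Y - j ` topspace X \<subseteq> V" "\<And>z. z \<in> V \<Longrightarrow> \<theta> z = 0"
    and f: "continuous_map X euclideanreal f"
  obtains M where "\<And>x. x \<in> topspace X \<Longrightarrow> \<theta> (j x) * \<bar>f x\<bar> \<le> M"
proof -
  let ?J = "j ` topspace X"
  define G where "G z = (if z \<in> V then 0 else \<theta> z * \<bar>f (inv_into (topspace X) j z)\<bar>)" for z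
  have "continuous_map Y euclideanreal G"
    unfolding G_def
  proof (rule continuous_map_paste_open[OF V(1) openin_image_Y])
    show "topspace Y \<subseteq> V \<union> ?J"
      using V(2) by blast
    show "continuous_map (subtopology Y ?J) euclideanreal (\<lambda>z. \<theta> z * \<bar>f (inv_into (topspace X) j z)\<bar>)"
      by (intro continuous_map_real_mult continuous_map_real_abs continuous_map_from_subtopology \<theta>
          continuous_map_through_inv_embedding[OF embedding_Y f])
    show "0 = \<theta> z * \<bar>f (inv_into (topspace X) j z)\<bar>" if "z \<in> V" for z
      using V(3)[OF that] by simp
  qed simp
  then have "bounded (G ` topspace Y)"
    using pseudocompact_Y unfolding pseudocompact_def by blast
  then obtain M where M: "\<And>z. z \<in> topspace Y \<Longrightarrow> \<bar>G z\<bar> \<le> M"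
    using bounded_imp_abs_le by blast
  have "\<theta> (j x) * \<bar>f x\<bar> \<le> M" if x: "x \<in> topspace X" for x
  proof -
    have "G (j x) = \<theta> (j x) * \<bar>f x\<bar>"
      using V(3) x embedding_map_imp_inj_on[OF embedding_Y] by (simp add: G_def)
    then show ?thesis
      using M[of "j x"] image_subset_topspace_Y x by auto
  qed
  with that show ?thesis by blast
qed

lemma image_point_exists:
  assumes "p \<in> zeta_set X B e"
  shows "\<exists>y. image_point p y"
proof (cases "p \<in> e ` topspace X")
  case True
  then show ?thesis using image_point_image by blast
next
  case False
  then have p_cl: "p \<in> B closure_of (topspace B - hewitt X B e)"
    using assms unfolding zeta_set_def by blast
  have p: "p \<in> topspace B"
    using assms zeta_subset_topspace by blast
  show ?thesis
  proof (rule ccontr)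
    assume "\<nexists>y. image_point p y"
    then have "\<And>y. \<not> image_point p y"
      by blast
    then obtain \<theta> V where \<theta>: "\<theta> \<in> bounded_continuous" "sc_extension \<theta> p = 1"
      and V: "openin Y V" "topspace Y - j ` topspace X \<subseteq> V" "\<And>z. z \<in> V \<Longrightarrow> \<theta> z = 0"
      using bump_vanishing_near_remainder[OF p] by blast
    define N where "N = {q \<in> topspace B. 1/2 < sc_extension \<theta> q}"
    have N: "openin B N" "p \<in> N"
      using openin_continuous_map_preimage[OF sc_extension(1)[OF \<theta>(1)], of "{1/2<..}"] p \<theta>(2)
      by (simp_all add: N_def)
    then obtain p' where p': "p' \<in> topspace B" "p' \<notin> hewitt X B e" "p' \<in> N"
      using p_cl unfolding in_closure_of by blast
    obtain f where f: "continuous_map X euclideanreal f"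
      and unbounded: "\<And>N M. openin B N \<Longrightarrow> p' \<in> N \<Longrightarrow> \<exists>x\<in>topspace X. e x \<in> N \<and> M < \<bar>f x\<bar>"
      using unbounded_near_non_hewitt_point[OF p'(1,2)] by blast
    obtain M where M: "\<And>x. x \<in> topspace X \<Longrightarrow> \<theta> (j x) * \<bar>f x\<bar> \<le> M"
      using bounded_product_with_bump[OF bounded_continuousD[OF \<theta>(1)] V f] by blast
    obtain x where x: "x \<in> topspace X" "e x \<in> N" "2 * M < \<bar>f x\<bar>"
      using unbounded[OF N(1) p'(3)] by blast
    have "1/2 < \<theta> (j x)"
      using x(2) sc_extension(2)[OF \<theta>(1) x(1)] by (simp add: N_def)
    then have "\<bar>f x\<bar> / 2 \<le> \<theta> (j x) * \<bar>f x\<bar>"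
      using mult_right_mono[of "1/2" "\<theta> (j x)" "\<bar>f x\<bar>"] by simp
    with M[OF x(1)] x(3) show False
      by linarith
  qed
qed

definition zeta_map :: "'b \<Rightarrow> 'c" where
  "zeta_map p = (SOME y. image_point p y)"

lemma image_point_zeta_map: "p \<in> zeta_set X B e \<Longrightarrow> image_point p (zeta_map p)"
  unfolding zeta_map_def by (rule someI_ex[OF image_point_exists])

lemma zeta_map_image:
  assumes "x \<in> topspace X"
  shows "zeta_map (e x) = j x"
proof -
  have "e x \<in> zeta_set X B e"
    using assms image_subset_zeta by blast
  then show ?thesis
    by (rule image_point_unique[OF image_point_zeta_map image_point_image[OF assms]])
qed

lemma topspace_zeta: "topspace (subtopology B (zeta_set X B e)) = zeta_set X B e"
  using zeta_subset_topspace by (simp add: Int_absorb1)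

text \<open>An Urysohn function \<psi> separating zeta_map p from the complement of U is pulled back to
  the neighbourhood of p where the extension of \<psi> is below 1/2.\<close>

lemma zeta_map_preimage_nhood:
  assumes p: "p \<in> zeta_set X B e" and U: "openin Y U" "zeta_map p \<in> U"
  obtains T where "openin (subtopology B (zeta_set X B e)) T" "p \<in> T"
    "T \<subseteq> zeta_set X B e \<inter> zeta_map -` U"
proof -
  let ?Z = "subtopology B (zeta_set X B e)"
  have p_image: "image_point p (zeta_map p)"
    using image_point_zeta_map[OF p] .
  have "zeta_map p \<in> topspace Y" "zeta_map p \<notin> topspace Y - U"
    using p_image U(2) unfolding image_point_def by simp_all
  then obtain \<psi> where \<psi>: "\<psi> \<in> bounded_continuous" "\<psi> (zeta_map p) = 0"
    "\<And>z. z \<in> topspace Y - U \<Longrightarrow> \<psi> z = 1"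
    using urysohn_function_Y[OF closedin_diff[OF closedin_topspace U(1)]] by blast
  define T where "T = {q \<in> topspace ?Z. sc_extension \<psi> q \<in> {..<1/2}}"
  have "continuous_map ?Z euclideanreal (sc_extension \<psi>)"
    by (rule continuous_map_from_subtopology[OF sc_extension(1)[OF \<psi>(1)]])
  then have "openin ?Z T"
    unfolding T_def by (rule openin_continuous_map_preimage) simp
  moreover have "p \<in> T"
    using p p_image \<psi>(1,2) topspace_zeta unfolding T_def image_point_def by auto
  moreover have "T \<subseteq> zeta_set X B e \<inter> zeta_map -` U"
  proof
    fix q assume q: "q \<in> T"
    then have "q \<in> zeta_set X B e"
      using topspace_zeta unfolding T_def by auto
    moreover have "zeta_map q \<in> topspace Y" "\<psi> (zeta_map q) < 1/2"
      using image_point_zeta_map[OF calculation] q \<psi>(1) unfolding T_def image_point_def by auto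
    then have "zeta_map q \<in> U"
      using \<psi>(3)[of "zeta_map q"] by (cases "zeta_map q \<in> U") simp_all
    ultimately show "q \<in> zeta_set X B e \<inter> zeta_map -` U"
      by blast
  qed
  ultimately show ?thesis
    using that by blast
qed

lemma continuous_map_zeta_map: "continuous_map (subtopology B (zeta_set X B e)) Y zeta_map"
  unfolding continuous_map_openin_preimage_eq topspace_zeta
proof (intro conjI allI impI)
  show "zeta_map \<in> zeta_set X B e \<rightarrow> topspace Y"
    using image_point_zeta_map unfolding image_point_def by blast
  fix U assume U: "openin Y U"
  show "openin (subtopology B (zeta_set X B e)) (zeta_set X B e \<inter> zeta_map -` U)"
    using zeta_map_preimage_nhood[OF _ U] by (subst openin_subopen) blast
qed

lemma zeta_maximal: "ext_le X Y j (subtopology B (zeta_set X B e)) e"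
  unfolding ext_le_def
  by (intro exI[of _ zeta_map] conjI ballI continuous_map_zeta_map zeta_map_image)

end

theorem lemma2p11:
  fixes X :: "'a topology" and B :: "'b topology" and e :: "'a \<Rightarrow> 'b"
  assumes "tychonoff X"
    and "locally_pseudocompact X"
    and "is_stone_cech X B e"
  shows "in_U X (subtopology B (zeta_set X B e)) e \<and>
    (\<forall>(Y :: 'c topology) j. in_U X Y j \<longrightarrow>
        ext_le X Y j (subtopology B (zeta_set X B e)) e)"
proof (intro conjI allI impI)
  interpret stone_cech X B e
    using assms(3) by unfold_locales
  show "in_U X (subtopology B (zeta_set X B e)) e"
    using zeta_in_U[OF assms(2)] .
  fix Y :: "'c topology" and j
  assume "in_U X Y j"
  then interpret extension_in_U X B e Y j
    using assms(3) by unfold_locales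
  show "ext_le X Y j (subtopology B (zeta_set X B e)) e"
    by (rule zeta_maximal)
qed

end
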